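(* For an integer $k\ge 2$ let $m_k=2^{2^k-1}F_1F_2\cdots F_{k-1}$, where $F_j=2^{2^j}+1$ is the $j$-th Fermat number. Then $m_k$ is imperfect, i.e. $2\beta(m_k)=m_k$, if and only if $k\in\{2,3,4,5\}$.
   Context: $\beta$ is the multiplicative arithmetic function with $\beta(1)=1$ and $\beta(p^a)=p^a-p^{a-1}+\cdots+(-1)^a=\frac{p^{a+1}+(-1)^a}{p+1}$ for every prime power $p^a$ ($a\ge1$). A positive integer $n$ is called imperfect if $2\beta(n)=n$. *)

theory Defs
  imports "HOL-Computational_Algebra.Primes"
begin

definition beta_pp :: "nat \<Rightarrow> nat \<Rightarrow> int" where
  "beta_pp p a = (\<Sum>i\<le>a. (-1) ^ (a - i) * int p ^ i)"

text \<open>beta is the multiplicative function determined by its prime-power values;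
  beta 1 = 1 (empty product).\<close>
definition beta :: "nat \<Rightarrow> int" where
  "beta n = (\<Prod>p\<in>prime_factors n. beta_pp p (multiplicity p n))"

definition imperfect :: "nat \<Rightarrow> bool" where
  "imperfect n \<longleftrightarrow> n > 0 \<and> 2 * beta n = int n"

definition fermat :: "nat \<Rightarrow> nat" where
  "fermat j = 2 ^ (2 ^ j) + 1"

definition m_k :: "nat \<Rightarrow> nat" where
  "m_k k = 2 ^ (2 ^ k - 1) * (\<Prod>j\<in>{1..k-1}. fermat j)"

end

theory Submission
  imports Defs
begin

(* Write P_n = F_1 F_2 ... F_n, so that m_k = 2^(2^k - 1) P_(k-1).
   From F_0 F_1 ... F_n + 1 = 2^(2^(n+1)) we get 3 P_n + 1 = 2^(2^(n+1)); hence P_n is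
   odd and beta(2^(2^k-1)) = (2^(2^k) - 1)/3 = P_(k-1).  Since beta is multiplicative,
   beta(m_k) = P_(k-1) beta(P_(k-1)), so m_k is imperfect iff beta(P_(k-1)) = 2^(2^k-2).
   - If F_1, ..., F_n are all prime (true for n <= 4), then beta(P_n) is the product of
     the F_j - 1 = 2^(2^j), which is exactly 2^(2^(n+1)-2); this gives k = 2,3,4,5.
   - For k >= 6 the prime 641 divides F_5, hence P_(k-1), so beta(641^e) with e >= 1
     divides the power of two beta(P_(k-1)).  But beta(p^e) mod 10 is 1 or 0 whenever
     p = 1 (mod 10), so it is either odd and larger than 1, or divisible by 5.
   The file first certifies the needed primes by trial division, then develops beta on
   prime powers, multiplicativity of beta, the Fermat products, the reduction above and
   the two directions; the theorem itself is a short combination of these. *)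

lemma prime_by_trial_division:
  fixes n B :: nat
  assumes "1 < n" "n < B * B" "list_all (\<lambda>d. n mod d \<noteq> 0) [2..<B]"
  shows "prime n"
proof (rule ccontr)
  assume "\<not> prime n"
  then obtain d where d: "d dvd n" "d \<noteq> 1" "d \<noteq> n" using assms(1) prime_nat_iff by auto
  then obtain q where dq: "n = d * q" by auto
  define c where "c = min d q"
  have "2 \<le> d" "2 \<le> q" using d dq assms(1) by (cases d; cases q; auto)+
  then have "2 \<le> c" "c dvd n" using dq by (auto simp: c_def min_def)
  moreover have "c * c \<le> n" using dq by (simp add: c_def min_def mult_le_mono)
  then have "c < B" using assms(2) by (meson le_less_trans mult_le_mono not_less)
  ultimately have "c \<in> set [2..<B]" and "n mod c = 0" by auto
  then show False using assms(3) by (auto simp: list_all_iff simp del: set_upt)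
qed

lemma prime_641: "prime (641::nat)"
  by (rule prime_by_trial_division[where B = 26]) (simp_all add: upt_rec)

lemma fermat_prime_upto_4:
  assumes "1 \<le> j" "j \<le> 4"
  shows "prime (fermat j)"
proof -
  have "prime (5::nat)"
    by (rule prime_by_trial_division[where B = 3]) (simp_all add: upt_rec)
  moreover have "prime (17::nat)"
    by (rule prime_by_trial_division[where B = 5]) (simp_all add: upt_rec)
  moreover have "prime (257::nat)"
    by (rule prime_by_trial_division[where B = 17]) (simp_all add: upt_rec)
  moreover have "prime (65537::nat)"
    by (rule prime_by_trial_division[where B = 257]) (simp_all add: upt_rec)
  moreover have "j \<in> {1, 2, 3, 4}" using assms by auto
  then have "fermat j \<in> {5, 17, 257, 65537}" by (auto simp: fermat_def)
  ultimately show ?thesis by (metis empty_iff insert_iff)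
qed

section \<open>beta on prime powers\<close>

lemma beta_pp_0: "beta_pp p 0 = 1"
  by (simp add: beta_pp_def)

lemma beta_pp_Suc: "beta_pp p (Suc a) = int p * beta_pp p a + (-1) ^ Suc a"
proof -
  have "beta_pp p (Suc a) = (-1) ^ Suc a + (\<Sum>i\<le>a. (-1) ^ (a - i) * int p ^ Suc i)"
    unfolding beta_pp_def by (subst sum.atMost_Suc_shift) simp
  also have "\<dots> = (-1) ^ Suc a + int p * (\<Sum>i\<le>a. (-1) ^ (a - i) * int p ^ i)"
    by (simp add: sum_distrib_left algebra_simps)
  finally show ?thesis by (simp add: beta_pp_def)
qed

lemma beta_pp_closed: "(int p + 1) * beta_pp p a = int p ^ Suc a + (-1) ^ a"
  by (induction a) (simp_all add: beta_pp_0 beta_pp_Suc algebra_simps)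

lemma beta_pp_ge:
  assumes "2 \<le> p" "1 \<le> a"
  shows "int p - 1 \<le> beta_pp p a"
  using assms(2)
proof (induction a rule: dec_induct)
  case base
  show ?case using beta_pp_Suc[of p 0] by (simp add: beta_pp_0)
next
  case (step a)
  have pos: "1 \<le> beta_pp p a" using step.IH assms(1) by simp
  have "int p * 1 \<le> int p * beta_pp p a"
    using pos by (intro mult_left_mono) auto
  moreover have "(-1::int) ^ Suc a \<ge> -1" by (cases "even a") auto
  ultimately show ?case using pos beta_pp_Suc[of p a] by linarith
qed

lemma beta_pp_mod_10:
  assumes "p mod 10 = 1"
  shows "beta_pp p a mod 10 = (if even a then 1 else 0)"
proof (induction a)
  case 0
  then show ?case by (simp add: beta_pp_0)
next
  case (Suc a)
  define q where "q = int (p div 10)"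
  have "p = 10 * (p div 10) + 1" using assms by presburger
  then have p: "int p = 10 * q + 1" unfolding q_def by linarith
  have "beta_pp p (Suc a) = 10 * (q * beta_pp p a) + (beta_pp p a + (-1) ^ Suc a)"
    by (simp add: beta_pp_Suc p algebra_simps)
  then have "beta_pp p (Suc a) mod 10 = (beta_pp p a mod 10 + (-1) ^ Suc a) mod 10"
    by (simp add: mod_add_left_eq mod_diff_left_eq)
  then show ?case using Suc by (cases "even a") auto
qed

text \<open>Hence such a beta(p^a), a >= 1, never divides a power of two: it is either odd
  and at least p - 1 > 1, or a multiple of 5.\<close>
lemma beta_pp_not_dvd_power_of_2:
  assumes "p mod 10 = 1" "1 < p" "1 \<le> a"
  shows "\<not> beta_pp p a dvd 2 ^ N"
proof
  assume dvd: "beta_pp p a dvd 2 ^ N"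
  show False
  proof (cases "even a")
    case True
    then have "beta_pp p a mod 10 mod 2 = 1" by (simp add: beta_pp_mod_10[OF assms(1)])
    then have "odd (beta_pp p a)" by (simp add: mod_mod_cancel odd_iff_mod_2_eq_one)
    then have "coprime (beta_pp p a) (2 ^ N)" by simp
    then have "is_unit (beta_pp p a)" using dvd coprime_absorb_left by blast
    moreover have "11 \<le> p" using assms(1,2) by presburger
    then have "10 \<le> beta_pp p a" using beta_pp_ge[of p a] assms(3) by linarith
    ultimately show False by simp
  next
    case False
    then have "beta_pp p a mod 10 mod 5 = 0" by (simp add: beta_pp_mod_10[OF assms(1)])
    then have "5 dvd beta_pp p a" by (simp add: mod_mod_cancel dvd_eq_mod_eq_0)
    then have "(5::int) dvd 2 ^ N" using dvd by (rule dvd_trans)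
    moreover have "prime (5::int)" by (simp add: prime_int_nat_transfer)
    ultimately have "(5::int) dvd 2" using prime_dvd_power by blast
    then show False by simp
  qed
qed

section \<open>Multiplicativity of beta\<close>

lemma beta_prime_power:
  assumes "prime p"
  shows "beta (p ^ e) = beta_pp p e"
  using assms by (cases "e = 0") (simp_all add: beta_def beta_pp_0 prime_factorization_prime_power)

text \<open>beta is multiplicative: coprime factors have disjoint sets of prime factors.\<close>
lemma beta_mult_coprime:
  fixes a b :: nat
  assumes "coprime a b" "a > 0" "b > 0"
  shows "beta (a * b) = beta a * beta b"
proof -
  have disj: "prime_factors a \<inter> prime_factors b = {}"
    using assms(1) by (auto simp: in_prime_factors_iff dest: coprime_common_divisor not_prime_unit)
  have mult: "multiplicity p (a * b) = multiplicity p a + multiplicity p b" if "prime p" for p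
    using that assms by (intro prime_elem_multiplicity_mult_distrib) auto
  have only_a: "multiplicity p (a * b) = multiplicity p a" if p: "p \<in> prime_factors a" for p
  proof -
    have "\<not> p dvd b" using p disj assms(3) by (auto simp: in_prime_factors_iff)
    then show ?thesis using p mult[of p] by (simp add: in_prime_factors_iff not_dvd_imp_multiplicity_0)
  qed
  have only_b: "multiplicity p (a * b) = multiplicity p b" if p: "p \<in> prime_factors b" for p
  proof -
    have "\<not> p dvd a" using p disj assms(2) by (auto simp: in_prime_factors_iff)
    then show ?thesis using p mult[of p] by (simp add: in_prime_factors_iff not_dvd_imp_multiplicity_0)
  qed
  have "beta (a * b) = (\<Prod>p\<in>prime_factors a \<union> prime_factors b. beta_pp p (multiplicity p (a * b)))"
    using assms by (simp add: beta_def prime_factors_product)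
  also have "\<dots> = (\<Prod>p\<in>prime_factors a. beta_pp p (multiplicity p (a * b)))
                * (\<Prod>p\<in>prime_factors b. beta_pp p (multiplicity p (a * b)))"
    using disj by (simp add: prod.union_disjoint)
  also have "\<dots> = beta a * beta b"
    unfolding beta_def using only_a only_b by simp
  finally show ?thesis .
qed

lemma beta_times_new_prime:
  assumes "prime p" "n > 0" "\<not> p dvd n"
  shows "beta (n * p) = beta n * (int p - 1)"
proof -
  have "beta (n * p) = beta n * beta (p ^ 1)"
    using assms prime_imp_coprime[of p n] prime_gt_0_nat[of p]
    by (simp add: beta_mult_coprime coprime_commute)
  then show ?thesis using beta_prime_power[OF assms(1), of 1] by (simp add: beta_pp_Suc beta_pp_0)
qed

lemma beta_pp_dvd_beta:
  assumes "p \<in> prime_factors n"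
  shows "beta_pp p (multiplicity p n) dvd beta n"
  unfolding beta_def using assms by (intro dvd_prodI) simp_all

section \<open>Products of Fermat numbers\<close>

text \<open>P_n = F_1 F_2 ... F_n, the odd part of m_(n+1).\<close>
definition fermat_prod :: "nat \<Rightarrow> nat" where
  "fermat_prod n = (\<Prod>j\<in>{1..n}. fermat j)"

lemma m_k_fermat_prod: "m_k k = 2 ^ (2 ^ k - 1) * fermat_prod (k - 1)"
  by (simp add: m_k_def fermat_prod_def)

lemma prod_fermat_plus_1: "(\<Prod>j<n. fermat j) + 1 = 2 ^ (2 ^ n)"
proof (induction n)
  case 0
  then show ?case by simp
next
  case (Suc n)
  define Q where "Q = (\<Prod>j<n. fermat j)"
  have "(\<Prod>j<Suc n. fermat j) + 1 = Q * (Q + 2) + 1"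
    using Suc by (simp add: Q_def fermat_def)
  also have "\<dots> = (Q + 1) ^ 2" by (simp add: power2_eq_square algebra_simps)
  also have "\<dots> = 2 ^ (2 ^ Suc n)"
    using Suc by (simp add: Q_def power_mult[symmetric] mult.commute)
  finally show ?case .
qed

text \<open>Removing F_0 = 3: 3 P_n + 1 = 2^(2^(n+1)).\<close>
lemma fermat_prod_identity: "3 * fermat_prod n + 1 = 2 ^ (2 ^ Suc n)"
proof -
  have "{..<Suc n} = insert 0 {1..n}" by auto
  then have "(\<Prod>j<Suc n. fermat j) = fermat 0 * fermat_prod n" by (simp add: fermat_prod_def)
  then show ?thesis using prod_fermat_plus_1[of "Suc n"] by (simp add: fermat_def)
qed

text \<open>P_n is odd, so it is coprime to the power of two in m_k.\<close>
lemma fermat_prod_odd: "odd (fermat_prod n)"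
  using fermat_prod_identity[of n] by (metis dvd_add_right_iff dvd_mult even_numeral even_power
      odd_one zero_less_numeral zero_less_power)

lemma beta_pp_2_fermat_prod: "beta_pp 2 (2 ^ Suc n - 1) = int (fermat_prod n)"
proof -
  have odd_exp: "odd ((2::nat) ^ Suc n - 1)" and succ: "Suc (2 ^ Suc n - 1) = (2::nat) ^ Suc n"
    by simp_all
  have "3 * beta_pp 2 (2 ^ Suc n - 1) = 2 ^ (2 ^ Suc n) - 1"
    using beta_pp_closed[of 2 "2 ^ Suc n - 1"] odd_exp by (simp only: succ) simp
  also have "\<dots> = 3 * int (fermat_prod n)"
    using arg_cong[OF fermat_prod_identity[of n], of int] by simp
  finally show ?thesis by simp
qed

text \<open>Since beta(m_k) = P_(k-1) beta(P_(k-1)), imperfection of m_k says exactly that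
  beta(P_(k-1)) = 2^(2^k - 2).  We write k = n + 1.\<close>
lemma imperfect_m_k_iff:
  "imperfect (m_k (Suc n)) \<longleftrightarrow> beta (fermat_prod n) = 2 ^ (2 ^ Suc n - 2)"
proof -
  define P where "P = fermat_prod n"
  define a where "a = 2 ^ Suc n - (1::nat)"
  have P_odd: "odd P" by (simp add: P_def fermat_prod_odd)
  then have P_pos: "P > 0" by (rule odd_pos)
  have "(2::nat) \<le> 2 ^ Suc n" using one_le_power[of "2::nat" n] by simp
  then have a: "a = Suc (2 ^ Suc n - 2)" unfolding a_def by linarith
  have m: "m_k (Suc n) = 2 ^ a * P" by (simp add: m_k_fermat_prod a_def P_def)
  have "beta (m_k (Suc n)) = beta (2 ^ a) * beta P"
    unfolding m using P_odd P_pos by (intro beta_mult_coprime) auto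
  also have "beta (2 ^ a) = int P"
    using beta_pp_2_fermat_prod[of n] by (simp add: beta_prime_power a_def P_def)
  finally have "2 * beta (m_k (Suc n)) = int P * (2 * beta P)" by simp
  moreover have "int (m_k (Suc n)) = int P * (2 * 2 ^ (2 ^ Suc n - 2))"
    unfolding m a by simp
  ultimately show ?thesis using P_pos by (auto simp: imperfect_def m P_def)
qed

text \<open>If F_1, ..., F_n are all prime, then beta(P_n) = (F_1 - 1) ... (F_n - 1) = 2^(2^(n+1)-2).
  Each F_(n+1) is a new prime factor since 0 < P_n < F_(n+1).\<close>
lemma beta_fermat_prod_of_primes:
  assumes "\<And>j. 1 \<le> j \<Longrightarrow> j \<le> n \<Longrightarrow> prime (fermat j)"
  shows "beta (fermat_prod n) = 2 ^ (2 ^ Suc n - 2)"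
  using assms
proof (induction n)
  case 0
  then show ?case by (simp add: fermat_prod_def beta_def)
next
  case (Suc n)
  have P_pos: "fermat_prod n > 0" using fermat_prod_odd[of n] by (auto intro: odd_pos)
  have "fermat_prod n < fermat (Suc n)"
    using fermat_prod_identity[of n] by (simp add: fermat_def)
  then have new: "\<not> fermat (Suc n) dvd fermat_prod n" using P_pos by (auto dest: dvd_imp_le)
  have "fermat_prod (Suc n) = fermat_prod n * fermat (Suc n)"
    by (simp add: fermat_prod_def)
  then have "beta (fermat_prod (Suc n)) = beta (fermat_prod n) * (int (fermat (Suc n)) - 1)"
    using beta_times_new_prime[OF Suc.prems[of "Suc n"] P_pos new] by simp
  also have "\<dots> = 2 ^ (2 ^ Suc n - 2) * 2 ^ 2 ^ Suc n"
    using Suc by (simp add: fermat_def)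
  also have "\<dots> = 2 ^ (2 ^ Suc (Suc n) - 2)"
  proof -
    have "2 ^ Suc (Suc n) - 2 = (2 ^ Suc n - 2) + (2::nat) ^ Suc n"
      using one_le_power[of 2 n] by simp
    then show ?thesis by (simp only: power_add)
  qed
  finally show ?case .
qed

text \<open>For k >= 6 the factor 641 of F_5 divides P_(k-1), and beta(641^e) cannot divide the
  power of two that beta(P_(k-1)) would have to be.\<close>
lemma beta_fermat_prod_not_power_of_2:
  assumes "n \<ge> 5"
  shows "beta (fermat_prod n) \<noteq> 2 ^ N"
proof
  assume pow: "beta (fermat_prod n) = 2 ^ N"
  define e where "e = multiplicity 641 (fermat_prod n)"
  have P_pos: "fermat_prod n > 0" using fermat_prod_odd[of n] by (rule odd_pos)
  have "641 dvd fermat 5" by (simp add: fermat_def)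
  also have "fermat 5 dvd fermat_prod n"
    unfolding fermat_prod_def using assms by (intro dvd_prodI) auto
  finally have factor: "641 \<in> prime_factors (fermat_prod n)"
    using prime_641 P_pos by (simp only: in_prime_factors_iff) blast
  then have "1 \<le> e"
    unfolding e_def using prime_multiplicity_gt_zero_iff[OF prime_imp_prime_elem[OF prime_641]]
    by (simp add: in_prime_factors_iff Suc_le_eq)
  moreover have "beta_pp 641 e dvd 2 ^ N"
    using beta_pp_dvd_beta[OF factor] pow by (simp only: e_def)
  ultimately show False using beta_pp_not_dvd_power_of_2[of 641 e N] by simp
qed

theorem mainTheorem2:
  fixes k :: nat
  assumes "k \<ge> 2"
  shows "imperfect (m_k k) \<longleftrightarrow> k \<in> {2, 3, 4, 5}"
proof -
  obtain n where k: "k = Suc n" using assms by (cases k) auto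
  have "imperfect (m_k k) \<longleftrightarrow> beta (fermat_prod n) = 2 ^ (2 ^ Suc n - 2)"
    unfolding k by (rule imperfect_m_k_iff)
  also have "\<dots> \<longleftrightarrow> n \<le> 4"
  proof
    assume "beta (fermat_prod n) = 2 ^ (2 ^ Suc n - 2)"
    then show "n \<le> 4" using beta_fermat_prod_not_power_of_2[of n] by fastforce
  next
    assume "n \<le> 4"
    then show "beta (fermat_prod n) = 2 ^ (2 ^ Suc n - 2)"
      using beta_fermat_prod_of_primes[of n] fermat_prime_upto_4 by simp
  qed
  finally show ?thesis using assms k by auto
qed

end
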